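(* Let $D,k\ge 1$ and $b\ge 0$ be integers. Every rooted tree $T$ of maximum degree at most $D$, with $b(T)\le b$, and with more than $f(D,b,k)$ leaves contains a comb with $k$ teeth, all of which are leaves of $T$.
   Context: For a rooted tree $T$, $b(T)$ denotes the maximum depth of a rooted complete binary tree which appears in $T$ as a rooted minor (the depth of a rooted tree is the maximum number of edges of a root-leaf path). The function $f:\mathbb{N}^3\to\mathbb{N}$ is defined recursively by $f(D,b,k)=1$ if $k=1$ or $b=0$, and $f(D,b,k)=f(D,b,k-1)+(D-1)\cdot f(D,b-1,k-1)$ if $k\ge 2$ and $b\ge 1$. A comb with teeth $v_1,\ldots,v_k$ is a tree consisting of a path $P$ (the spine) and vertex-disjoint paths $P_1,\ldots,P_k$ of length at least one such that $P_i$ joins $v_i$ to a vertex of $P$. *)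

theory Defs
  imports Main
begin

definition is_path :: "('a \<Rightarrow> 'a \<Rightarrow> bool) \<Rightarrow> 'a set \<Rightarrow> 'a list \<Rightarrow> bool" where
  "is_path E V ps \<longleftrightarrow> ps \<noteq> [] \<and> distinct ps \<and> set ps \<subseteq> V \<and>
     (\<forall>i. Suc i < length ps \<longrightarrow> E (ps ! i) (ps ! Suc i))"

definition is_tree :: "'a set \<Rightarrow> ('a \<Rightarrow> 'a \<Rightarrow> bool) \<Rightarrow> bool" where
  "is_tree V E \<longleftrightarrow> finite V \<and> V \<noteq> {} \<and>
     (\<forall>x y. E x y \<longrightarrow> x \<in> V \<and> y \<in> V \<and> E y x \<and> x \<noteq> y) \<and>
     (\<forall>x\<in>V. \<forall>y\<in>V. \<exists>!ps. is_path E V ps \<and> hd ps = x \<and> last ps = y)"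

definition rooted_tree :: "'a set \<Rightarrow> ('a \<Rightarrow> 'a \<Rightarrow> bool) \<Rightarrow> 'a \<Rightarrow> bool" where
  "rooted_tree V E r \<longleftrightarrow> is_tree V E \<and> r \<in> V"

definition degree :: "'a set \<Rightarrow> ('a \<Rightarrow> 'a \<Rightarrow> bool) \<Rightarrow> 'a \<Rightarrow> nat" where
  "degree V E v = card {w \<in> V. E v w}"

text \<open>Leaves of a rooted tree: non-root vertices without children, i.e. non-root vertices of degree 1.\<close>
definition leaves :: "'a set \<Rightarrow> ('a \<Rightarrow> 'a \<Rightarrow> bool) \<Rightarrow> 'a \<Rightarrow> 'a set" where
  "leaves V E r = {v \<in> V. v \<noteq> r \<and> degree V E v = 1}"

definition connected_set :: "('a \<Rightarrow> 'a \<Rightarrow> bool) \<Rightarrow> 'a set \<Rightarrow> bool" where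
  "connected_set E S \<longleftrightarrow> (\<forall>x\<in>S. \<forall>y\<in>S. \<exists>ps. is_path E S ps \<and> hd ps = x \<and> last ps = y)"

text \<open>The complete binary tree of depth d has as vertices the bool lists of length \<le> d,
  root [], and children xs @ [c].\<close>
definition cbt_rooted_minor :: "'a set \<Rightarrow> ('a \<Rightarrow> 'a \<Rightarrow> bool) \<Rightarrow> 'a \<Rightarrow> nat \<Rightarrow> bool" where
  "cbt_rooted_minor V E r d \<longleftrightarrow>
    (\<exists>X :: bool list \<Rightarrow> 'a set.
       (\<forall>xs. length xs \<le> d \<longrightarrow> X xs \<noteq> {} \<and> X xs \<subseteq> V \<and> connected_set E (X xs)) \<and>
       (\<forall>xs ys. length xs \<le> d \<longrightarrow> length ys \<le> d \<longrightarrow> xs \<noteq> ys \<longrightarrow> X xs \<inter> X ys = {}) \<and>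
       r \<in> X [] \<and>
       (\<forall>xs c. length xs < d \<longrightarrow> (\<exists>u\<in>X xs. \<exists>w\<in>X (xs @ [c]). E u w)))"

definition bT :: "'a set \<Rightarrow> ('a \<Rightarrow> 'a \<Rightarrow> bool) \<Rightarrow> 'a \<Rightarrow> nat" where
  "bT V E r = (GREATEST d. cbt_rooted_minor V E r d)"

fun f :: "nat \<Rightarrow> nat \<Rightarrow> nat \<Rightarrow> nat" where
  "f D b 0 = 1"
| "f D b (Suc 0) = 1"
| "f D 0 (Suc (Suc k)) = 1"
| "f D (Suc b) (Suc (Suc k)) = f D (Suc b) (Suc k) + (D - 1) * f D b (Suc k)"

definition has_comb_with_teeth_in :: "'a set \<Rightarrow> ('a \<Rightarrow> 'a \<Rightarrow> bool) \<Rightarrow> nat \<Rightarrow> 'a set \<Rightarrow> bool" where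
  "has_comb_with_teeth_in V E k L \<longleftrightarrow>
    (\<exists>P Q. is_path E V P \<and>
       (\<forall>i<k. is_path E V (Q i) \<and> length (Q i) \<ge> 2 \<and>
              set (Q i) \<inter> set P = {last (Q i)} \<and> hd (Q i) \<in> L) \<and>
       (\<forall>i<k. \<forall>j<k. i \<noteq> j \<longrightarrow> set (Q i) \<inter> set (Q j) = {}))"

end

theory Submission
  imports Defs
begin

(* Induct on the subtree T_v below a vertex v, encoding b(T_v) \<le> b as "the complete binary
   tree of depth b + 1 is not a rooted minor of T_v".  Suppose T_v has more than f(D,b,k) leaves
   and k \<ge> 2.  If v has one child, pass to it.  Otherwise b \<ge> 1, and at most one child c is
   heavy (b(T_c) = b), since two heavy children together with v carry a minor of depth b + 1.
   The recursion of f is then exactly a pigeonhole bound: either the heavy child has more than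
   f(D,b,k-1) leaves, or one of the at most D - 1 light children (b(T_c) \<le> b - 1) has more than
   f(D,b-1,k-1) leaves.  The comb with k - 1 teeth found below that child is extended by v on
   its spine and by one more tooth running from a leaf below a sibling up to v. *)

lemma is_path_nonempty: "is_path E S ps \<Longrightarrow> ps \<noteq> []"
  by (simp add: is_path_def)

lemma is_path_subset: "is_path E S ps \<Longrightarrow> set ps \<subseteq> S"
  by (simp add: is_path_def)

lemma is_path_singleton: "v \<in> S \<Longrightarrow> is_path E S [v]"
  by (simp add: is_path_def)

lemma is_path_mono: "is_path E S ps \<Longrightarrow> S \<subseteq> S' \<Longrightarrow> is_path E S' ps"
  by (auto simp: is_path_def)

lemma is_path_Cons:
  "is_path E S ps \<Longrightarrow> v \<in> S \<Longrightarrow> v \<notin> set ps \<Longrightarrow> E v (hd ps) \<Longrightarrow> is_path E S (v # ps)"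
  unfolding is_path_def by (auto simp: nth_Cons hd_conv_nth split: nat.splits)

lemma is_path_append:
  assumes "is_path E S xs" "is_path E S ys" "set xs \<inter> set ys = {}" "E (last xs) (hd ys)"
  shows "is_path E S (xs @ ys)"
  unfolding is_path_def
proof (intro conjI allI impI)
  fix i assume i: "Suc i < length (xs @ ys)"
  consider "Suc i < length xs" | "Suc i = length xs" | "length xs \<le> i" by linarith
  then show "E ((xs @ ys) ! i) ((xs @ ys) ! Suc i)"
  proof cases
    case 2
    then have "i = length xs - 1" by simp
    with 2 show ?thesis using assms by (simp add: is_path_def nth_append last_conv_nth hd_conv_nth)
  qed (use assms i in \<open>auto simp: is_path_def nth_append Suc_diff_le\<close>)
qed (use assms in \<open>auto simp: is_path_def\<close>)

lemma is_path_snoc: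
  "is_path E S ps \<Longrightarrow> v \<in> S \<Longrightarrow> v \<notin> set ps \<Longrightarrow> E (last ps) v \<Longrightarrow> is_path E S (ps @ [v])"
  by (rule is_path_append) (auto simp: is_path_def)

lemma is_path_snoc_edge:
  assumes "is_path E S (ps @ [v])" "ps \<noteq> []"
  shows "E (last ps) v"
proof -
  have "Suc (length ps - 1) < length (ps @ [v])" "Suc (length ps - 1) = length ps"
    using assms(2) by auto
  then have "E ((ps @ [v]) ! (length ps - 1)) ((ps @ [v]) ! length ps)"
    using assms(1) unfolding is_path_def by metis
  then show ?thesis using assms(2) by (simp add: nth_append last_conv_nth)
qed

lemma is_path_take: "is_path E S ps \<Longrightarrow> 0 < j \<Longrightarrow> is_path E S (take j ps)"
  unfolding is_path_def by (auto dest: in_set_takeD)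

lemma is_path_drop: "is_path E S ps \<Longrightarrow> j < length ps \<Longrightarrow> is_path E S (drop j ps)"
  unfolding is_path_def by (auto dest: in_set_dropD)

lemma is_path_rev:
  assumes "is_path E S ps" and sym: "\<And>x y. E x y \<Longrightarrow> E y x"
  shows "is_path E S (rev ps)"
  unfolding is_path_def
proof (intro conjI allI impI)
  fix i assume i: "Suc i < length (rev ps)"
  have step: "\<And>j. Suc j < length ps \<Longrightarrow> E (ps ! j) (ps ! Suc j)"
    using assms(1) by (simp add: is_path_def)
  have "E (ps ! (length ps - Suc (Suc i))) (ps ! Suc (length ps - Suc (Suc i)))"
    by (rule step) (use i in simp)
  moreover have "Suc (length ps - Suc (Suc i)) = length ps - Suc i" using i by simp
  ultimately show "E (rev ps ! i) (rev ps ! Suc i)" using i sym by (simp add: rev_nth)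
qed (use assms(1) in \<open>auto simp: is_path_def\<close>)

lemma connected_set_singleton: "connected_set E {v}"
  unfolding connected_set_def by (auto intro!: exI[of _ "[v]"] simp: is_path_def)

lemma connected_set_insert:
  assumes conn: "connected_set E S" and "c \<in> S" "E v c" "v \<notin> S"
    and sym: "\<And>x y. E x y \<Longrightarrow> E y x"
  shows "connected_set E (insert v S)"
proof -
  have from_v: "\<exists>ps. is_path E (insert v S) ps \<and> hd ps = v \<and> last ps = z" if "z \<in> S" for z
  proof -
    obtain ps where ps: "is_path E S ps" "hd ps = c" "last ps = z"
      using conn \<open>c \<in> S\<close> \<open>z \<in> S\<close> unfolding connected_set_def by blast
    have "is_path E (insert v S) (v # ps)"
      using is_path_Cons[OF is_path_mono[OF ps(1)]] is_path_subset[OF ps(1)] ps(2) assms(3,4)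
      by blast
    then show ?thesis using ps is_path_nonempty by fastforce
  qed
  have to_v: "\<exists>ps. is_path E (insert v S) ps \<and> hd ps = z \<and> last ps = v" if "z \<in> S" for z
  proof -
    obtain ps where ps: "is_path E (insert v S) ps" "hd ps = v" "last ps = z"
      using from_v \<open>z \<in> S\<close> by blast
    then show ?thesis
      using is_path_rev[OF ps(1) sym] is_path_nonempty[OF ps(1)] by (auto simp: hd_rev last_rev)
  qed
  show ?thesis
    unfolding connected_set_def
  proof (intro ballI)
    fix x y assume "x \<in> insert v S" "y \<in> insert v S"
    then consider "x = v" "y = v" | "x = v" "y \<in> S" | "x \<in> S" "y = v" | "x \<in> S" "y \<in> S"
      by blast
    then show "\<exists>ps. is_path E (insert v S) ps \<and> hd ps = x \<and> last ps = y"
    proof cases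
      case 4
      then show ?thesis
        using conn is_path_mono[of E S _ "insert v S"] unfolding connected_set_def by blast
    qed (use from_v to_v is_path_singleton[of v "insert v S" E] in auto)
  qed
qed

lemma cbt_rooted_minor_mono: "cbt_rooted_minor S E v d \<Longrightarrow> S \<subseteq> S' \<Longrightarrow> cbt_rooted_minor S' E v d"
  unfolding cbt_rooted_minor_def by (elim exE, rule_tac x = X in exI) auto

lemma cbt_rooted_minor_0: "v \<in> S \<Longrightarrow> cbt_rooted_minor S E v 0"
  unfolding cbt_rooted_minor_def using connected_set_singleton by (intro exI[of _ "\<lambda>_. {v}"]) simp

lemma cbt_rooted_minor_less_card:
  assumes "finite S" "cbt_rooted_minor S E v d"
  shows "d < card S"
proof -
  obtain X :: "bool list \<Rightarrow> 'a set" where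
    X: "\<forall>xs. length xs \<le> d \<longrightarrow> X xs \<noteq> {} \<and> X xs \<subseteq> S \<and> connected_set E (X xs)"
       "\<forall>xs ys. length xs \<le> d \<longrightarrow> length ys \<le> d \<longrightarrow> xs \<noteq> ys \<longrightarrow> X xs \<inter> X ys = {}"
    using assms(2) unfolding cbt_rooted_minor_def by blast
  define g where "g i = (SOME x. x \<in> X (replicate i True))" for i
  have g: "g i \<in> X (replicate i True)" "g i \<in> S" if "i \<le> d" for i
  proof -
    have "X (replicate i True) \<noteq> {}" "X (replicate i True) \<subseteq> S" using X(1) that by auto
    moreover from this(1) show "g i \<in> X (replicate i True)"
      unfolding g_def by (auto intro: someI_ex)
    ultimately show "g i \<in> S" by blast
  qed
  have "inj_on g {..d}"
  proof (rule inj_onI)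
    fix i j assume "i \<in> {..d}" "j \<in> {..d}" "g i = g j"
    then have meet: "X (replicate i True) \<inter> X (replicate j True) \<noteq> {}" using g(1) by fastforce
    show "i = j"
    proof (rule ccontr)
      assume "i \<noteq> j"
      then have "replicate i True \<noteq> replicate j True" by (metis length_replicate)
      then show False using X(2) meet \<open>i \<in> {..d}\<close> \<open>j \<in> {..d}\<close> by simp
    qed
  qed
  moreover have "g ` {..d} \<subseteq> S" using g(2) by auto
  ultimately have "card {..d} \<le> card S" using card_inj_on_le assms(1) by blast
  then show ?thesis by simp
qed

lemma cbt_rooted_minor_extend_root:
  assumes "cbt_rooted_minor S E c d" "v \<notin> S" "E v c" and sym: "\<And>x y. E x y \<Longrightarrow> E y x"
  shows "cbt_rooted_minor (insert v S) E v d"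
proof -
  obtain X :: "bool list \<Rightarrow> 'a set" where
    X: "\<And>xs. length xs \<le> d \<Longrightarrow> X xs \<noteq> {} \<and> X xs \<subseteq> S \<and> connected_set E (X xs)"
       "\<And>xs ys. length xs \<le> d \<Longrightarrow> length ys \<le> d \<Longrightarrow> xs \<noteq> ys \<Longrightarrow> X xs \<inter> X ys = {}"
       "c \<in> X []" "\<And>xs a. length xs < d \<Longrightarrow> \<exists>u\<in>X xs. \<exists>w\<in>X (xs @ [a]). E u w"
    using assms(1) unfolding cbt_rooted_minor_def by blast
  define Y where "Y = X([] := insert v (X []))"
  have conn: "connected_set E (Y [])"
    unfolding Y_def using connected_set_insert[of E "X []" c v] X(1)[of "[]"] X(3) assms(2,3) sym
    by auto
  have notin: "v \<notin> X xs" if "length xs \<le> d" for xs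
    using X(1)[OF that] assms(2) by blast
  show ?thesis
    unfolding cbt_rooted_minor_def
  proof (intro exI[of _ Y] conjI allI impI)
    fix xs :: "bool list" assume "length xs \<le> d"
    then show "Y xs \<noteq> {}" "Y xs \<subseteq> insert v S" "connected_set E (Y xs)"
      using X(1) conn by (auto simp: Y_def)
  next
    fix xs ys :: "bool list" assume "length xs \<le> d" "length ys \<le> d" "xs \<noteq> ys"
    then show "Y xs \<inter> Y ys = {}" using X(2) notin by (auto simp: Y_def)
  next
    fix xs :: "bool list" and a assume "length xs < d"
    then show "\<exists>u\<in>Y xs. \<exists>w\<in>Y (xs @ [a]). E u w" using X(4)[of xs a] by (auto simp: Y_def)
  qed (simp add: Y_def)
qed

lemma cbt_rooted_minor_join:
  assumes "cbt_rooted_minor S1 E c1 d" "cbt_rooted_minor S2 E c2 d"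
    and "S1 \<inter> S2 = {}" "v \<notin> S1" "v \<notin> S2" "E v c1" "E v c2"
  shows "cbt_rooted_minor (insert v (S1 \<union> S2)) E v (Suc d)"
proof -
  define S where "S a = (if a then S1 else S2)" for a :: bool
  define c where "c a = (if a then c1 else c2)" for a :: bool
  have S: "S a \<subseteq> S1 \<union> S2" "v \<notin> S a" "E v (c a)" "a \<noteq> b \<Longrightarrow> S a \<inter> S b = {}" for a b
    using assms(3-7) by (auto simp: S_def c_def)
  have "\<forall>a. cbt_rooted_minor (S a) E (c a) d"
    using assms(1,2) by (simp add: S_def c_def)
  then have "\<forall>a. \<exists>Xa :: bool list \<Rightarrow> 'a set.
      (\<forall>xs. length xs \<le> d \<longrightarrow> Xa xs \<noteq> {} \<and> Xa xs \<subseteq> S a \<and> connected_set E (Xa xs)) \<and>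
      (\<forall>xs ys. length xs \<le> d \<longrightarrow> length ys \<le> d \<longrightarrow> xs \<noteq> ys \<longrightarrow> Xa xs \<inter> Xa ys = {}) \<and>
      c a \<in> Xa [] \<and> (\<forall>xs b. length xs < d \<longrightarrow> (\<exists>u\<in>Xa xs. \<exists>w\<in>Xa (xs @ [b]). E u w))"
    unfolding cbt_rooted_minor_def by blast
  then obtain X :: "bool \<Rightarrow> bool list \<Rightarrow> 'a set" where
    X: "\<And>a xs. length xs \<le> d \<Longrightarrow> X a xs \<noteq> {} \<and> X a xs \<subseteq> S a \<and> connected_set E (X a xs)"
       "\<And>a xs ys. length xs \<le> d \<Longrightarrow> length ys \<le> d \<Longrightarrow> xs \<noteq> ys \<Longrightarrow> X a xs \<inter> X a ys = {}"
       "\<And>a. c a \<in> X a []" "\<And>a xs b. length xs < d \<Longrightarrow> \<exists>u\<in>X a xs. \<exists>w\<in>X a (xs @ [b]). E u w"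
    by metis
  define Y where "Y xs = (case xs of [] \<Rightarrow> {v} | a # ys \<Rightarrow> X a ys)" for xs
  have branch: "Y xs \<noteq> {} \<and> Y xs \<subseteq> insert v (S1 \<union> S2) \<and> connected_set E (Y xs)"
    if "length xs \<le> Suc d" for xs
  proof (cases xs)
    case Nil
    then show ?thesis using connected_set_singleton by (simp add: Y_def)
  next
    case (Cons a ys)
    then have "length ys \<le> d" using that by simp
    then show ?thesis using Cons X(1)[of ys a] S(1)[of a] by (auto simp: Y_def)
  qed
  have disjoint: "Y xs \<inter> Y ys = {}"
    if "length xs \<le> Suc d" "length ys \<le> Suc d" "xs \<noteq> ys" for xs ys
  proof -
    have Y_Cons: "v \<notin> Y (a # zs) \<and> Y (a # zs) \<subseteq> S a" if "length zs \<le> d" for a zs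
      using X(1)[OF that, of a] S(2)[of a] by (auto simp: Y_def)
    have v_notin: "v \<notin> Y zs" if "zs \<noteq> []" "length zs \<le> Suc d" for zs
      using that Y_Cons by (cases zs) auto
    consider "xs = []" | "ys = []" | a xs' b ys' where "xs = a # xs'" "ys = b # ys'"
      by (meson list.exhaust)
    then show ?thesis
    proof cases
      case (3 a xs' b ys')
      then have len: "length xs' \<le> d" "length ys' \<le> d" using that(1,2) by auto
      show ?thesis
      proof (cases "a = b")
        case True
        then show ?thesis using X(2)[OF len] 3 that(3) by (simp add: Y_def)
      next
        case False
        then show ?thesis using Y_Cons[OF len(1), of a] Y_Cons[OF len(2), of b] S(4) 3 by blast
      qed
    qed (use that v_notin in \<open>auto simp: Y_def[of "[]"]\<close>)
  qed
  have edge: "\<exists>u\<in>Y xs. \<exists>w\<in>Y (xs @ [b]). E u w" if "length xs < Suc d" for xs b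
  proof (cases xs)
    case Nil
    then show ?thesis using X(3)[of b] S(3)[of b] by (auto simp: Y_def)
  next
    case (Cons a ys)
    then show ?thesis using X(4)[of ys a b] that by (auto simp: Y_def)
  qed
  show ?thesis
    unfolding cbt_rooted_minor_def
    using branch disjoint edge by (intro exI[of _ Y]) (auto simp: Y_def)
qed

definition rooted_comb ::
  "('a \<Rightarrow> 'a \<Rightarrow> bool) \<Rightarrow> 'a set \<Rightarrow> 'a \<Rightarrow> nat \<Rightarrow> 'a set \<Rightarrow> 'a list \<Rightarrow> (nat \<Rightarrow> 'a list) \<Rightarrow> bool"
  where
  "rooted_comb E S v k L P Q \<longleftrightarrow> is_path E S P \<and> hd P = v \<and>
     (\<forall>i<k. is_path E S (Q i) \<and> 2 \<le> length (Q i) \<and>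
            set (Q i) \<inter> set P = {last (Q i)} \<and> hd (Q i) \<in> L) \<and>
     (\<forall>i<k. \<forall>j<k. i \<noteq> j \<longrightarrow> set (Q i) \<inter> set (Q j) = {})"

lemma has_comb_with_teeth_in_if_rooted_comb:
  "rooted_comb E V v k L P Q \<Longrightarrow> has_comb_with_teeth_in V E k L"
  unfolding rooted_comb_def has_comb_with_teeth_in_def by blast

lemma rooted_comb_mono:
  "rooted_comb E S v k L P Q \<Longrightarrow> S \<subseteq> S' \<Longrightarrow> rooted_comb E S' v k L P Q"
  unfolding rooted_comb_def using is_path_mono by blast

lemma rooted_comb_single_tooth:
  assumes "is_path E S T" "hd T \<in> L" "last T = v" "2 \<le> length T"
  shows "rooted_comb E S v 1 L [v] (\<lambda>_. T)"
proof -
  have "v \<in> set T" using assms(3,4) last_in_set[of T] by fastforce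
  then show ?thesis
    using assms is_path_singleton[of v S E] is_path_subset[OF assms(1)]
    unfolding rooted_comb_def by auto
qed

lemma rooted_comb_Cons:
  assumes comb: "rooted_comb E S c k L P Q" and "v \<notin> S" "E v c"
  shows "rooted_comb E (insert v S) v k L (v # P) Q"
proof -
  have P: "is_path E S P" "hd P = c" using comb by (auto simp: rooted_comb_def)
  have "is_path E (insert v S) (v # P)"
    using is_path_Cons[OF is_path_mono[OF P(1)]] is_path_subset[OF P(1)] P(2) assms(2,3) by blast
  moreover have "set (Q i) \<inter> set (v # P) = set (Q i) \<inter> set P" if "i < k" for i
    using comb that is_path_subset assms(2) unfolding rooted_comb_def by fastforce
  ultimately show ?thesis
    using comb is_path_mono[of E S _ "insert v S"] unfolding rooted_comb_def by auto
qed

lemma rooted_comb_add_tooth: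
  assumes comb: "rooted_comb E S c k L P Q" and "v \<notin> S" "E v c"
    and T: "is_path E (insert v S') T" "hd T \<in> L" "last T = v" "2 \<le> length T"
    and "S \<inter> S' = {}"
  shows "rooted_comb E (insert v (S \<union> S')) v (Suc k) L (v # P) (Q(k := T))"
proof -
  have comb': "rooted_comb E (insert v (S \<union> S')) v k L (v # P) Q"
    by (rule rooted_comb_mono[OF rooted_comb_Cons[OF assms(1-3)]]) blast
  have "v \<in> set T" using T(3,4) last_in_set[of T] by fastforce
  moreover have "set P \<subseteq> S" using comb by (simp add: rooted_comb_def is_path_def)
  ultimately have meet_spine: "set T \<inter> set (v # P) = {last T}"
    using is_path_subset[OF T(1)] T(3) assms(8) by auto
  have avoid_teeth: "set (Q i) \<inter> set T = {}" if "i < k" for i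
  proof -
    have "set (Q i) \<subseteq> S" using comb that by (simp add: rooted_comb_def is_path_def)
    then show ?thesis using is_path_subset[OF T(1)] assms(2,8) by blast
  qed
  have "is_path E (insert v (S \<union> S')) T" by (rule is_path_mono[OF T(1)]) blast
  then show ?thesis
    using comb' meet_spine avoid_teeth T(2,4) unfolding rooted_comb_def
    by (auto simp: less_Suc_eq Int_commute)
qed

lemma f_pos: "0 < f D b k"
  by (induction D b k rule: f.induct) auto

lemma f_mono: "f D b k \<le> f D (Suc b) k"
proof (induction D b k rule: f.induct)
  case (3 D k)
  then show ?case using f_pos[of D 1 "Suc k"] by simp
next
  case (4 D b k)
  then show ?case by (simp add: add_mono mult_le_mono2)
qed auto

lemma sum_large_imp_ex_above_threshold:
  fixes n :: "'c \<Rightarrow> nat"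
  assumes "finite C" "card C \<le> D" "B \<le> A"
    and heavy_unique: "\<And>h h'. h \<in> C \<Longrightarrow> h' \<in> C \<Longrightarrow> H h \<Longrightarrow> H h' \<Longrightarrow> h = h'"
    and large: "A + (D - 1) * B < sum n C"
  shows "\<exists>c\<in>C. (if H c then A else B) < n c"
proof (rule ccontr)
  assume "\<not> ?thesis"
  then have below: "n c \<le> (if H c then A else B)" if "c \<in> C" for c
    using that by (meson not_less)
  have "sum n C \<le> A + (D - 1) * B"
  proof (cases "\<exists>h\<in>C. H h")
    case True
    then obtain h where h: "h \<in> C" "H h" by blast
    have "n c \<le> B" if "c \<in> C - {h}" for c
    proof -
      have "\<not> H c" using heavy_unique h that by blast
      then show ?thesis using below[of c] that by simp
    qed
    then have "sum n (C - {h}) \<le> card (C - {h}) * B"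
      by (intro sum_bounded_above[where K = B, simplified])
    also have "\<dots> \<le> (D - 1) * B"
      using assms(1,2) h(1) by (intro mult_le_mono1) simp
    finally show ?thesis
      using sum.remove[OF assms(1) h(1), of n] below[OF h(1)] h(2) by simp
  next
    case False
    then have "sum n C \<le> card C * B"
      using below by (intro sum_bounded_above[where K = B, simplified]) auto
    also have "\<dots> \<le> D * B" using assms(2) by (simp add: mult_le_mono1)
    also have "\<dots> \<le> A + (D - 1) * B" using assms(3) by (cases D) auto
    finally show ?thesis .
  qed
  then show False using large by simp
qed

locale finite_rooted_tree =
  fixes V :: "'a set" and E :: "'a \<Rightarrow> 'a \<Rightarrow> bool" and r :: 'a
  assumes rooted_tree: "rooted_tree V E r"
begin

lemma finite_V: "finite V"
  and root_in_V: "r \<in> V"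
  and edge_sym: "E x y \<Longrightarrow> E y x"
  and edge_irrefl: "E x y \<Longrightarrow> x \<noteq> y"
  and edge_in_V: "E x y \<Longrightarrow> x \<in> V \<and> y \<in> V"
  and ex1_path: "x \<in> V \<Longrightarrow> y \<in> V \<Longrightarrow> \<exists>!ps. is_path E V ps \<and> hd ps = x \<and> last ps = y"
  using rooted_tree by (simp_all add: rooted_tree_def is_tree_def)

lemma path_unique:
  assumes "is_path E V ps" "is_path E V qs" "hd ps = hd qs" "last ps = last qs"
  shows "ps = qs"
proof -
  have "hd ps \<in> V" "last ps \<in> V"
    using assms(1) is_path_subset is_path_nonempty by (metis hd_in_set last_in_set subsetD)+
  with ex1_path assms show ?thesis by metis
qed

definition root_path :: "'a \<Rightarrow> 'a list" where
  "root_path w = (THE ps. is_path E V ps \<and> hd ps = r \<and> last ps = w)"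

definition subtree :: "'a \<Rightarrow> 'a set" where
  "subtree v = {w \<in> V. v \<in> set (root_path w)}"

(* The guard v \<in> V matters: root_path is unspecified outside V. *)
definition children :: "'a \<Rightarrow> 'a set" where
  "children v = {c \<in> V. v \<in> V \<and> root_path c = root_path v @ [c]}"

lemma root_path: "w \<in> V \<Longrightarrow> is_path E V (root_path w) \<and> hd (root_path w) = r \<and> last (root_path w) = w"
  unfolding root_path_def by (rule theI') (rule ex1_path[OF root_in_V])

lemma root_path_nonempty: "w \<in> V \<Longrightarrow> root_path w \<noteq> []"
  using root_path is_path_nonempty by blast

lemma root_path_eq: "is_path E V ps \<Longrightarrow> hd ps = r \<Longrightarrow> root_path (last ps) = ps"
  using path_unique root_path is_path_subset is_path_nonempty by (metis last_in_set subsetD)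

lemma root_path_root: "root_path r = [r]"
  using root_path_eq[OF is_path_singleton[OF root_in_V]] by simp

lemma in_root_path_self: "w \<in> V \<Longrightarrow> w \<in> set (root_path w)"
  using root_path root_path_nonempty by (metis last_in_set)

lemma root_path_nth:
  assumes "w \<in> V" "i < length (root_path w)"
  shows "root_path (root_path w ! i) = take (Suc i) (root_path w)"
proof -
  have "is_path E V (take (Suc i) (root_path w))" using is_path_take root_path[OF assms(1)] by blast
  moreover have "hd (take (Suc i) (root_path w)) = r"
    using root_path[OF assms(1)] root_path_nonempty[OF assms(1)] by simp
  moreover have "last (take (Suc i) (root_path w)) = root_path w ! i"
    using assms(2) by (simp add: take_Suc_conv_app_nth)
  ultimately show ?thesis using root_path_eq by metis
qed

lemma in_root_pathE:
  assumes "w \<in> V" "u \<in> set (root_path w)"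
  obtains i where "i < length (root_path w)" "u = root_path w ! i"
    "root_path u = take (Suc i) (root_path w)"
  using root_path_nth assms by (metis in_set_conv_nth)

lemma subtree_subset_V: "subtree v \<subseteq> V"
  by (auto simp: subtree_def)

lemma finite_subtree: "finite (subtree v)"
  using subtree_subset_V finite_V finite_subset by blast

lemma in_subtree_self: "v \<in> V \<Longrightarrow> v \<in> subtree v"
  using in_root_path_self by (simp add: subtree_def)

lemma subtree_root: "subtree r = V"
proof -
  have "r \<in> set (root_path w)" if "w \<in> V" for w
    using root_path[OF that] root_path_nonempty[OF that] by (metis hd_in_set)
  then show ?thesis by (auto simp: subtree_def)
qed

lemma child_in_V: "c \<in> children v \<Longrightarrow> c \<in> V"
  and parent_in_V: "c \<in> children v \<Longrightarrow> v \<in> V"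
  and root_path_child: "c \<in> children v \<Longrightarrow> root_path c = root_path v @ [c]"
  by (simp_all add: children_def)

lemma child_not_in_root_path: "c \<in> children v \<Longrightarrow> c \<notin> set (root_path v)"
  using root_path[OF child_in_V] root_path_child unfolding is_path_def by fastforce

lemma child_ne_root: "c \<in> children v \<Longrightarrow> c \<noteq> r"
  using root_path_child root_path_root root_path_nonempty[OF parent_in_V] by fastforce

lemma edge_child: "c \<in> children v \<Longrightarrow> E v c"
  using is_path_snoc_edge[of E V "root_path v" c] root_path[OF child_in_V] root_path[OF parent_in_V]
    root_path_nonempty[OF parent_in_V] root_path_child by metis

lemma children_subset_neighbours: "children v \<subseteq> {w \<in> V. E v w}"
  using edge_child child_in_V by blast

lemma finite_children: "finite (children v)"
  by (rule finite_subset[OF _ finite_V]) (auto dest: child_in_V)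

lemma subtree_child_subset: "c \<in> children v \<Longrightarrow> subtree c \<subseteq> subtree v"
proof
  fix w assume c: "c \<in> children v" and "w \<in> subtree c"
  then have w: "w \<in> V" "c \<in> set (root_path w)" by (auto simp: subtree_def)
  then obtain i where "root_path c = take (Suc i) (root_path w)" by (rule in_root_pathE)
  then have "set (root_path v) \<subseteq> set (root_path w)"
    using root_path_child[OF c] by (metis set_append set_take_subset le_supE)
  then show "w \<in> subtree v"
    using in_root_path_self[OF parent_in_V[OF c]] w(1) by (auto simp: subtree_def)
qed

lemma parent_not_in_subtree_child: "c \<in> children v \<Longrightarrow> v \<notin> subtree c"
  using child_not_in_root_path by (auto simp: subtree_def)

lemma subtree_insert_child_subset: "c \<in> children v \<Longrightarrow> insert v (subtree c) \<subseteq> subtree v"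
  using subtree_child_subset in_subtree_self[OF parent_in_V] by blast

lemma card_subtree_child_less: "c \<in> children v \<Longrightarrow> card (subtree c) < card (subtree v)"
  using subtree_child_subset parent_not_in_subtree_child in_subtree_self[OF parent_in_V]
    finite_subtree by (metis psubsetI psubset_card_mono)

lemma subtree_children_disjoint:
  assumes "c1 \<in> children v" "c2 \<in> children v" "c1 \<noteq> c2"
  shows "subtree c1 \<inter> subtree c2 = {}"
proof (rule ccontr)
  assume "subtree c1 \<inter> subtree c2 \<noteq> {}"
  then obtain w where w: "w \<in> V" "c1 \<in> set (root_path w)" "c2 \<in> set (root_path w)"
    by (auto simp: subtree_def)
  obtain i1 where i1: "i1 < length (root_path w)" "c1 = root_path w ! i1"
    "root_path c1 = take (Suc i1) (root_path w)" using w(1,2) by (rule in_root_pathE)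
  obtain i2 where i2: "i2 < length (root_path w)" "c2 = root_path w ! i2"
    "root_path c2 = take (Suc i2) (root_path w)" using w(1,3) by (rule in_root_pathE)
  have "length (root_path c1) = length (root_path c2)" using root_path_child assms by simp
  then have "i1 = i2" using i1 i2 by simp
  then show False using i1 i2 assms(3) by simp
qed

lemma subtree_eq_insert_children: "v \<in> V \<Longrightarrow> subtree v = insert v (\<Union>c\<in>children v. subtree c)"
proof
  assume v: "v \<in> V"
  show "insert v (\<Union>c\<in>children v. subtree c) \<subseteq> subtree v"
    using in_subtree_self[OF v] subtree_child_subset by blast
  show "subtree v \<subseteq> insert v (\<Union>c\<in>children v. subtree c)"
  proof
    fix w assume "w \<in> subtree v"
    then have w: "w \<in> V" "v \<in> set (root_path w)" by (auto simp: subtree_def)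
    show "w \<in> insert v (\<Union>c\<in>children v. subtree c)"
    proof (cases "w = v")
      case False
      obtain i where i: "i < length (root_path w)" "v = root_path w ! i"
        "root_path v = take (Suc i) (root_path w)" using w by (rule in_root_pathE)
      have "i \<noteq> length (root_path w) - 1"
        using False i root_path[OF w(1)] root_path_nonempty[OF w(1)] by (metis last_conv_nth)
      then have si: "Suc i < length (root_path w)" using i by simp
      define c where "c = root_path w ! Suc i"
      have "c \<in> set (root_path w)" using si c_def by simp
      then have c: "c \<in> V" "w \<in> subtree c" using root_path[OF w(1)] w(1)
        by (auto simp: subtree_def is_path_def)
      have "root_path c = take (Suc (Suc i)) (root_path w)"
        using root_path_nth[OF w(1) si] c_def by simp
      also have "\<dots> = root_path v @ [c]" using si i c_def by (simp add: take_Suc_conv_app_nth)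
      finally have "c \<in> children v" using c(1) v by (simp add: children_def)
      then show ?thesis using c(2) by blast
    qed simp
  qed
qed

lemma neighbour_parent_or_child:
  assumes w: "w \<in> V" and "E w u"
  shows "u \<in> children w \<or> w \<in> children u"
proof (cases "u \<in> set (root_path w)")
  case True
  obtain i where i: "i < length (root_path w)" "u = root_path w ! i"
    "root_path u = take (Suc i) (root_path w)" using w True by (rule in_root_pathE)
  have u: "u \<in> V" "u \<noteq> w" using edge_in_V edge_irrefl \<open>E w u\<close> by auto
  have "is_path E V (drop i (root_path w))" using is_path_drop root_path[OF w] i(1) by blast
  moreover have "is_path E V [u, w]"
    using u w edge_sym[OF \<open>E w u\<close>] by (auto simp: is_path_def nth_Cons split: nat.splits)
  moreover have "hd (drop i (root_path w)) = u" "last (drop i (root_path w)) = w"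
    using i root_path[OF w] by (simp_all add: hd_drop_conv_nth)
  ultimately have "drop i (root_path w) = [u, w]" using path_unique by simp
  then have "root_path w = root_path u @ [w]"
    using i(3) by (metis append_take_drop_id drop_Suc list.sel(3) tl_drop)
  then show ?thesis using u w by (simp add: children_def)
next
  case False
  have "u \<in> V" using edge_in_V \<open>E w u\<close> by blast
  then have "is_path E V (root_path w @ [u])"
    using is_path_snoc root_path[OF w] False \<open>E w u\<close> by metis
  then have "root_path u = root_path w @ [u]"
    using root_path_eq[of "root_path w @ [u]"] root_path[OF w] root_path_nonempty[OF w] by simp
  then show ?thesis using \<open>u \<in> V\<close> w by (simp add: children_def)
qed

lemma ex_parent:
  assumes w: "w \<in> V" "w \<noteq> r"
  obtains p where "w \<in> children p"
proof -
  define q where "q = butlast (root_path w)"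
  have q: "root_path w = q @ [w]"
    using root_path[OF w(1)] root_path_nonempty[OF w(1)] q_def by (metis append_butlast_last_id)
  have "q \<noteq> []"
  proof
    assume "q = []"
    then have "root_path w = [w]" using q by simp
    then show False using root_path[OF w(1)] w(2) by simp
  qed
  have "0 < length (root_path w) - 1" using q \<open>q \<noteq> []\<close> by simp
  then have "is_path E V (take (length (root_path w) - 1) (root_path w))"
    using root_path[OF w(1)] is_path_take by blast
  then have path_q: "is_path E V q" by (simp add: q_def butlast_conv_take)
  have "last q \<in> V" using is_path_subset[OF path_q] last_in_set[OF \<open>q \<noteq> []\<close>] by blast
  moreover have "hd q = r" using root_path[OF w(1)] q \<open>q \<noteq> []\<close> by simp
  then have "root_path (last q) = q" using root_path_eq[OF path_q] by blast
  ultimately show ?thesis using that[of "last q"] q w(1) by (simp add: children_def)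
qed

lemma parent_unique: "w \<in> children p \<Longrightarrow> w \<in> children p' \<Longrightarrow> p = p'"
  using root_path_child root_path parent_in_V by (metis butlast_snoc)

lemma leaf_if_no_children:
  assumes "w \<in> V" "w \<noteq> r" "children w = {}"
  shows "w \<in> leaves V E r"
proof -
  obtain p where p: "w \<in> children p" using assms(1,2) by (rule ex_parent)
  have "{u \<in> V. E w u} = {p}"
    using neighbour_parent_or_child[OF assms(1)] assms(3) parent_unique[OF p]
      edge_child[OF p] edge_sym parent_in_V[OF p] by blast
  then show ?thesis using assms by (simp add: leaves_def degree_def)
qed

lemma not_leaf_if_child:
  assumes "c \<in> children v"
  shows "v \<notin> leaves V E r"
proof
  assume leaf: "v \<in> leaves V E r"
  then have v: "v \<in> V" "v \<noteq> r" by (auto simp: leaves_def)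
  obtain p where p: "v \<in> children p" using v by (rule ex_parent)
  have "p \<in> set (root_path v)"
    using root_path_child[OF p] in_root_path_self[OF parent_in_V[OF p]] by simp
  then have "p \<noteq> c" using child_not_in_root_path[OF assms] by blast
  moreover have "{p, c} \<subseteq> {u \<in> V. E v u}"
    using edge_sym[OF edge_child[OF p]] edge_child[OF assms] parent_in_V[OF p] child_in_V[OF assms]
    by blast
  ultimately have "2 \<le> card {u \<in> V. E v u}"
    using card_mono[OF _ \<open>{p, c} \<subseteq> _\<close>] finite_V by fastforce
  then show False using leaf by (simp add: leaves_def degree_def)
qed

lemma leaf_in_subtree:
  assumes "w \<in> V" "w \<noteq> r"
  obtains l where "l \<in> leaves V E r" "l \<in> subtree w"
  using assms
proof (induction "card (subtree w)" arbitrary: w rule: less_induct)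
  case less
  show ?case
  proof (cases "children w = {}")
    case True
    then show ?thesis using leaf_if_no_children less.prems in_subtree_self by blast
  next
    case False
    then obtain c where c: "c \<in> children w" by blast
    show ?thesis
      using less.hyps[OF card_subtree_child_less[OF c] _ child_in_V[OF c] child_ne_root[OF c]]
        subtree_child_subset[OF c] less.prems(1) by blast
  qed
qed

lemma path_to_subtree_root:
  assumes "w \<in> subtree v"
  obtains ps where "is_path E (subtree v) ps" "hd ps = w" "last ps = v"
proof -
  have w: "w \<in> V" "v \<in> set (root_path w)" using assms by (auto simp: subtree_def)
  obtain j where j: "j < length (root_path w)" "v = root_path w ! j"
    using w(2) by (metis in_set_conv_nth)
  define ps where "ps = rev (drop j (root_path w))"
  have "is_path E V ps"
    unfolding ps_def using is_path_rev is_path_drop root_path[OF w(1)] j(1) edge_sym by blast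
  moreover have "set ps \<subseteq> subtree v"
  proof
    fix u assume "u \<in> set ps"
    then obtain i where "i < length (root_path w) - j" "u = drop j (root_path w) ! i"
      unfolding ps_def by (auto simp: in_set_conv_nth)
    then have i: "j + i < length (root_path w)" "u = root_path w ! (j + i)" using j by auto
    then have "root_path u = take (Suc (j + i)) (root_path w)" using root_path_nth[OF w(1)] by simp
    then have "v \<in> set (root_path u)" using i(1) j by (metis in_set_conv_nth length_take
        less_add_Suc1 min_less_iff_conj nth_take)
    moreover have "u \<in> V" using i root_path[OF w(1)] nth_mem is_path_subset by blast
    ultimately show "u \<in> subtree v" by (simp add: subtree_def)
  qed
  ultimately have "is_path E (subtree v) ps" by (simp add: is_path_def)
  moreover have "hd ps = w" "last ps = v"
    unfolding ps_def using j root_path[OF w(1)] by (simp_all add: hd_rev last_rev hd_drop_conv_nth)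
  ultimately show ?thesis by (rule that)
qed

lemma tooth_path:
  assumes c: "c \<in> children v" and "l \<in> subtree c"
  obtains T where "is_path E (insert v (subtree c)) T" "hd T = l" "last T = v" "2 \<le> length T"
proof -
  obtain ps where ps: "is_path E (subtree c) ps" "hd ps = l" "last ps = c"
    using assms(2) by (rule path_to_subtree_root)
  have "ps \<noteq> []" using ps(1) by (rule is_path_nonempty)
  show ?thesis
  proof (rule that[of "ps @ [v]"])
    have "is_path E (insert v (subtree c)) ps" by (rule is_path_mono[OF ps(1)]) blast
    then show "is_path E (insert v (subtree c)) (ps @ [v])"
      using is_path_subset[OF ps(1)] ps(3) parent_not_in_subtree_child[OF c]
        edge_sym[OF edge_child[OF c]] by (intro is_path_snoc) auto
    show "hd (ps @ [v]) = l" using \<open>ps \<noteq> []\<close> ps(2) by simp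
    show "2 \<le> length (ps @ [v])" using \<open>ps \<noteq> []\<close> by (cases ps) auto
  qed simp
qed

lemma no_cbt_rooted_minor_child:
  assumes "\<not> cbt_rooted_minor (subtree v) E v d" "c \<in> children v"
  shows "\<not> cbt_rooted_minor (subtree c) E c d"
proof
  assume "cbt_rooted_minor (subtree c) E c d"
  then have "cbt_rooted_minor (insert v (subtree c)) E v d"
    using parent_not_in_subtree_child[OF assms(2)] edge_child[OF assms(2)] edge_sym
    by (rule cbt_rooted_minor_extend_root)
  moreover note subtree_insert_child_subset[OF assms(2)]
  ultimately show False using cbt_rooted_minor_mono assms(1) by metis
qed

lemma cbt_rooted_minor_two_children:
  assumes "c1 \<in> children v" "c2 \<in> children v" "c1 \<noteq> c2"
    and "cbt_rooted_minor (subtree c1) E c1 d" "cbt_rooted_minor (subtree c2) E c2 d"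
  shows "cbt_rooted_minor (subtree v) E v (Suc d)"
proof -
  have "cbt_rooted_minor (insert v (subtree c1 \<union> subtree c2)) E v (Suc d)"
    using assms(4,5) subtree_children_disjoint[OF assms(1-3)]
      parent_not_in_subtree_child[OF assms(1)] parent_not_in_subtree_child[OF assms(2)]
      edge_child[OF assms(1)] edge_child[OF assms(2)]
    by (rule cbt_rooted_minor_join)
  moreover have "insert v (subtree c1 \<union> subtree c2) \<subseteq> subtree v"
    using subtree_child_subset assms(1,2) in_subtree_self[OF parent_in_V[OF assms(1)]] by blast
  ultimately show ?thesis by (rule cbt_rooted_minor_mono)
qed

definition leaf_count :: "'a \<Rightarrow> nat" where
  "leaf_count v = card (leaves V E r \<inter> subtree v)"

lemma leaf_count_no_children:
  assumes "v \<in> V" "children v = {}"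
  shows "leaf_count v \<le> 1"
  using subtree_eq_insert_children[OF assms(1)] assms(2)
  by (simp add: leaf_count_def card_le_Suc0_iff_eq)

lemma leaf_count_eq_sum_children:
  assumes "v \<in> V" "children v \<noteq> {}"
  shows "leaf_count v = (\<Sum>c\<in>children v. leaf_count c)"
proof -
  have "v \<notin> leaves V E r" using assms(2) not_leaf_if_child by blast
  then have "leaves V E r \<inter> subtree v = (\<Union>c\<in>children v. leaves V E r \<inter> subtree c)"
    using subtree_eq_insert_children[OF assms(1)] by auto
  then show ?thesis
    unfolding leaf_count_def
    by (simp only:) (rule card_UN_disjoint, auto simp: finite_children finite_subtree
        dest: subtree_children_disjoint)
qed

lemma card_children_le_degree: "card (children v) \<le> degree V E v"
  unfolding degree_def using children_subset_neighbours finite_V by (intro card_mono) auto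

lemma rooted_comb_one_tooth:
  assumes "c \<in> children v"
  obtains P Q where "rooted_comb E (subtree v) v 1 (leaves V E r) P Q"
proof -
  obtain l where "l \<in> leaves V E r" "l \<in> subtree c"
    using child_in_V[OF assms] child_ne_root[OF assms] by (rule leaf_in_subtree)
  moreover obtain T where
    "is_path E (insert v (subtree c)) T" "hd T = l" "last T = v" "2 \<le> length T"
    using assms \<open>l \<in> subtree c\<close> by (rule tooth_path)
  ultimately have "rooted_comb E (insert v (subtree c)) v 1 (leaves V E r) [v] (\<lambda>_. T)"
    by (intro rooted_comb_single_tooth) simp_all
  then have "rooted_comb E (subtree v) v 1 (leaves V E r) [v] (\<lambda>_. T)"
    using subtree_insert_child_subset[OF assms] by (rule rooted_comb_mono)
  then show ?thesis by (rule that)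
qed

lemma rooted_comb_extend_to_parent:
  assumes "c \<in> children v" "rooted_comb E (subtree c) c k L P Q"
  shows "rooted_comb E (subtree v) v k L (v # P) Q"
  using rooted_comb_Cons[OF assms(2) parent_not_in_subtree_child[OF assms(1)]
      edge_child[OF assms(1)]]
    subtree_insert_child_subset[OF assms(1)] by (rule rooted_comb_mono)

lemma rooted_comb_add_tooth_via_sibling:
  assumes "c \<in> children v" "c' \<in> children v" "c \<noteq> c'"
    and "rooted_comb E (subtree c) c k (leaves V E r) P Q"
  obtains Q' where "rooted_comb E (subtree v) v (Suc k) (leaves V E r) (v # P) Q'"
proof -
  obtain l where "l \<in> leaves V E r" "l \<in> subtree c'"
    using child_in_V[OF assms(2)] child_ne_root[OF assms(2)] by (rule leaf_in_subtree)
  moreover obtain T where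
    "is_path E (insert v (subtree c')) T" "hd T = l" "last T = v" "2 \<le> length T"
    using assms(2) \<open>l \<in> subtree c'\<close> by (rule tooth_path)
  ultimately have "rooted_comb E (insert v (subtree c \<union> subtree c')) v (Suc k) (leaves V E r)
      (v # P) (Q(k := T))"
    using assms(4) parent_not_in_subtree_child[OF assms(1)] edge_child[OF assms(1)]
      subtree_children_disjoint[OF assms(1-3)]
    by (intro rooted_comb_add_tooth) simp_all
  moreover have "insert v (subtree c \<union> subtree c') \<subseteq> subtree v"
    using subtree_insert_child_subset assms(1,2) by blast
  ultimately show ?thesis using that rooted_comb_mono by metis
qed

lemma child_with_many_leaves:
  assumes degree: "\<forall>w\<in>V. degree V E w \<le> D"
    and children: "c1 \<in> children v" "c2 \<in> children v" "c1 \<noteq> c2"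
    and no_minor: "\<not> cbt_rooted_minor (subtree v) E v (Suc b)"
    and many: "f D b (Suc (Suc k)) < leaf_count v"
  obtains c b' where "c \<in> children v" "\<not> cbt_rooted_minor (subtree c) E c (Suc b')"
    "f D b' (Suc k) < leaf_count c"
proof -
  have v: "v \<in> V" using parent_in_V[OF children(1)] .
  have "b \<noteq> 0"
  proof
    assume "b = 0"
    have "cbt_rooted_minor (subtree c) E c 0" if "c \<in> children v" for c
      using in_subtree_self[OF child_in_V[OF that]] by (rule cbt_rooted_minor_0)
    then show False
      using cbt_rooted_minor_two_children[OF children] children(1,2) no_minor \<open>b = 0\<close> by simp
  qed
  then obtain b0 where b: "b = Suc b0" using not0_implies_Suc by blast
  let ?heavy = "\<lambda>c. cbt_rooted_minor (subtree c) E c b"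
  have "\<exists>c\<in>children v. (if ?heavy c then f D b (Suc k) else f D b0 (Suc k)) < leaf_count c"
  proof (rule sum_large_imp_ex_above_threshold)
    show "card (children v) \<le> D"
      using card_children_le_degree[of v] degree v by (blast intro: le_trans)
    show "f D b0 (Suc k) \<le> f D b (Suc k)" using f_mono b by simp
    show "h = h'" if "h \<in> children v" "h' \<in> children v" "?heavy h" "?heavy h'" for h h'
      using cbt_rooted_minor_two_children[OF that(1,2) _ that(3,4)] no_minor by blast
    have "f D b (Suc k) + (D - 1) * f D b0 (Suc k) = f D b (Suc (Suc k))" using b by simp
    also have "\<dots> < sum leaf_count (children v)"
      using many leaf_count_eq_sum_children[OF v] children(1) by (metis empty_iff)
    finally show "f D b (Suc k) + (D - 1) * f D b0 (Suc k) < sum leaf_count (children v)" .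
  qed (rule finite_children)
  then obtain c where c: "c \<in> children v"
    and above: "(if ?heavy c then f D b (Suc k) else f D b0 (Suc k)) < leaf_count c" by blast
  show ?thesis
  proof (cases "?heavy c")
    case True
    then show ?thesis
      using that[OF c no_cbt_rooted_minor_child[OF no_minor c]] above by simp
  next
    case False
    then show ?thesis using that[OF c, of b0] above b by simp
  qed
qed

lemma rooted_comb_in_subtree:
  assumes degree: "\<forall>w\<in>V. degree V E w \<le> D"
  shows "v \<in> V \<Longrightarrow> \<not> cbt_rooted_minor (subtree v) E v (Suc b) \<Longrightarrow> 0 < k \<Longrightarrow>
    f D b k < leaf_count v \<Longrightarrow> \<exists>P Q. rooted_comb E (subtree v) v k (leaves V E r) P Q"
proof (induction "card (subtree v)" arbitrary: v b k rule: less_induct)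
  case less
  have IH: "\<exists>P Q. rooted_comb E (subtree c) c k' (leaves V E r) P Q"
    if "c \<in> children v" "\<not> cbt_rooted_minor (subtree c) E c (Suc b')" "0 < k'"
      "f D b' k' < leaf_count c" for c b' k'
    using less.hyps[OF card_subtree_child_less[OF that(1)] child_in_V[OF that(1)]] that(2-4)
    by blast
  have "children v \<noteq> {}"
    using leaf_count_no_children[OF less.prems(1)] less.prems(4) f_pos[of D b k] by linarith
  then obtain c where c: "c \<in> children v" by blast
  consider "k = 1" | k' where "k = Suc (Suc k')"
    using less.prems(3) by (metis One_nat_def gr0_implies_Suc not0_implies_Suc)
  then show ?case
  proof cases
    case 1
    then show ?thesis using rooted_comb_one_tooth[OF c] by metis
  next
    case (2 k')
    show ?thesis
    proof (cases "children v = {c}")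
      case True
      then have "leaf_count c = leaf_count v"
        using leaf_count_eq_sum_children[OF less.prems(1)] by simp
      then obtain P Q where "rooted_comb E (subtree c) c k (leaves V E r) P Q"
        using IH[OF c no_cbt_rooted_minor_child[OF less.prems(2) c] less.prems(3)] less.prems(4)
        by auto
      then show ?thesis using rooted_comb_extend_to_parent[OF c] by blast
    next
      case False
      then obtain c' where c': "c' \<in> children v" "c' \<noteq> c" using c by blast
      obtain c0 b0 where c0: "c0 \<in> children v" "\<not> cbt_rooted_minor (subtree c0) E c0 (Suc b0)"
        "f D b0 (Suc k') < leaf_count c0"
        using child_with_many_leaves[OF degree c c'(1) c'(2)[symmetric] less.prems(2)]
          less.prems(4) 2 by auto
      obtain P Q where "rooted_comb E (subtree c0) c0 (Suc k') (leaves V E r) P Q"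
        using IH[OF c0(1,2) _ c0(3)] by auto
      moreover obtain s where "s \<in> children v" "s \<noteq> c0" using c c' by metis
      ultimately show ?thesis
        using rooted_comb_add_tooth_via_sibling[OF c0(1)] 2 by metis
    qed
  qed
qed

end

theorem corollary16:
  fixes V :: "'a set" and E :: "'a \<Rightarrow> 'a \<Rightarrow> bool" and r :: 'a
    and D b k :: nat
  assumes "D \<ge> 1" and "k \<ge> 1"
    and "rooted_tree V E r"
    and "\<forall>v\<in>V. degree V E v \<le> D"
    and "bT V E r \<le> b"
    and "card (leaves V E r) > f D b k"
  shows "has_comb_with_teeth_in V E k (leaves V E r)"
proof -
  interpret finite_rooted_tree V E r by unfold_locales (rule assms(3))
  have "\<not> cbt_rooted_minor (subtree r) E r (Suc b)"
  proof
    assume "cbt_rooted_minor (subtree r) E r (Suc b)"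
    then have "Suc b \<le> bT V E r"
      unfolding bT_def subtree_root
      using cbt_rooted_minor_less_card[OF finite_V] by (intro Greatest_le_nat[where b = "card V"])
        (auto intro: less_imp_le)
    with assms(5) show False by simp
  qed
  moreover have "0 < k" using assms(2) by simp
  moreover have "f D b k < leaf_count r"
    using assms(6) by (simp add: leaf_count_def subtree_root Int_absorb2 leaves_def)
  ultimately obtain P Q where "rooted_comb E (subtree r) r k (leaves V E r) P Q"
    using rooted_comb_in_subtree[OF assms(4) root_in_V] by blast
  then have "rooted_comb E V r k (leaves V E r) P Q" by (simp only: subtree_root)
  then show ?thesis by (rule has_comb_with_teeth_in_if_rooted_comb)
qed

end
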